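(* Let $V$ be a finite set, $f:2^V\to\mathbb{R}$ non-decreasing and submodular, $b\ge 1$ an integer with $|V|\ge b$, and $A\subseteq V$ an advice set with $|A|=b$. Let $U$ be the output of the learning-augmented algorithm described in the context (run with arbitrary subsets $A_i\subseteq A$, $|A_i|=i$), and let $\mathrm{OPT}\subseteq V$ be any set with $|\mathrm{OPT}|=b$ maximizing $f$ among all $b$-element subsets of $V$. Then $f(U)\ge f(A)$ and \[ f(U)\;\ge\;\max_{i\in\{0,1,\dots,b-1\}}\left[f(A_i)+\frac{1-\frac1e}{\left\lceil \frac{|\mathrm{OPT}\setminus A_i|}{b-i}\right\rceil}\,\bigl(f(\mathrm{OPT}\cup A_i)-f(A_i)\bigr)\right]. \]
   Context: $f$ non-decreasing means $f(X)\le f(Y)$ for $X\subseteq Y$; submodular means $f(X\cup\{e\})-f(X)\ge f(Y\cup\{e\})-f(Y)$ for $X\subseteq Y\subseteq V$, $e\notin Y$. Learning-augmented algorithm: choose subsets $A_0,A_1,\dots,A_b$ of $A$ with $|A_i|=i$ (so $A_0=\emptyset$, $A_b=A$). For each $i\in\{0,\dots,b\}$: start with $B_i=\emptyset$; while $|B_i|<b-i$, add to $B_i$ an element $e\in V\setminus(A_i\cup B_i)$ maximizing $f(A_i\cup B_i\cup\{e\})-f(A_i\cup B_i)$. Set $U_i=A_i\cup B_i$ (so $|U_i|=b$). Output $U=U_{i^*}$ where $i^*$ maximizes $f(U_i)$ over $i\in\{0,\dots,b\}$. *)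

theory Defs
  imports Complex_Main
begin

definition nondecreasing_on :: "'a set \<Rightarrow> ('a set \<Rightarrow> real) \<Rightarrow> bool" where
  "nondecreasing_on V f \<longleftrightarrow> (\<forall>X Y. X \<subseteq> Y \<and> Y \<subseteq> V \<longrightarrow> f X \<le> f Y)"

definition submodular_on :: "'a set \<Rightarrow> ('a set \<Rightarrow> real) \<Rightarrow> bool" where
  "submodular_on V f \<longleftrightarrow> (\<forall>X Y e. X \<subseteq> Y \<and> Y \<subseteq> V \<and> e \<in> V \<and> e \<notin> Y \<longrightarrow>
      f (X \<union> {e}) - f X \<ge> f (Y \<union> {e}) - f Y)"

definition greedy_run :: "('a set \<Rightarrow> real) \<Rightarrow> 'a set \<Rightarrow> 'a set \<Rightarrow> 'a list \<Rightarrow> bool" where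
  "greedy_run f V S xs \<longleftrightarrow> distinct xs \<and> set xs \<subseteq> V - S \<and>
     (\<forall>j < length xs. \<forall>e \<in> V - (S \<union> set (take j xs)).
        f (S \<union> set (take j xs) \<union> {e}) - f (S \<union> set (take j xs))
          \<le> f (S \<union> set (take (Suc j) xs)) - f (S \<union> set (take j xs)))"

end

theory Submission
  imports Defs "HOL-Analysis.Convex"
begin

text \<open>The greedy completion of \<open>A\<^sub>i\<close> is compared with the target \<open>T = OPT \<union> A\<^sub>i\<close>. With
  \<open>m = |T - A\<^sub>i|\<close> and \<open>S\<^sub>j\<close> the set after \<open>j\<close> greedy steps, submodularity bounds the gap \<open>f T - f S\<^sub>j\<close> by the sum of
  the \<open>m\<close> single-element gains at \<open>S\<^sub>j\<close>, each at most the greedy gain, so the gap shrinks by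
  a factor \<open>1 - 1/m\<close> per step. After \<open>k = b - i\<close> steps the remaining fraction is
  \<open>(1 - 1/m)\<^sup>k \<le> exp (-k/m) \<le> exp (-1/\<lceil>m/k\<rceil>)\<close>, and concavity of \<open>1 - exp (-x)\<close> on
  \<open>[0, 1]\<close> turns this into the factor \<open>(1 - 1/e)/\<lceil>m/k\<rceil>\<close>. The output is at least every
  \<open>f (U\<^sub>i)\<close>, in particular \<open>f (U\<^sub>b) = f A\<close>.\<close>

lemma linear_le_one_minus_exp_neg:
  fixes x :: real
  assumes "0 \<le> x" "x \<le> 1"
  shows "x * (1 - 1 / exp 1) \<le> 1 - exp (- x)"
proof -
  have "exp ((1 - x) *\<^sub>R 0 + x *\<^sub>R (-1)) \<le> (1 - x) * exp 0 + x * exp (-1)"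
    using convex_onD[OF exp_convex, of x 0 "-1"] assms by auto
  then show ?thesis by (simp add: exp_minus divide_inverse algebra_simps)
qed

lemma one_minus_inverse_power_le:
  fixes m :: real and k :: nat
  assumes "m \<ge> 1" "k \<ge> 1"
  shows "(1 - 1 / m) ^ k \<le> 1 - (1 - 1 / exp 1) / real_of_int \<lceil>m / real k\<rceil>"
proof -
  define c where "c = real_of_int \<lceil>m / real k\<rceil>"
  have "m / real k > 0" using assms by simp
  then have c: "c \<ge> 1" unfolding c_def by (simp add: one_le_ceiling)
  have "m / real k \<le> c" unfolding c_def by (rule le_of_int_ceiling)
  then have "m \<le> c * real k"
    using assms by (simp add: pos_divide_le_eq)
  then have ck: "1 / c \<le> real k / m"
    using assms c by (simp add: field_simps)
  have "(1 - 1 / m) ^ k \<le> exp (- 1 / m) ^ k"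
    using exp_ge_add_one_self[of "- 1 / m"] assms by (intro power_mono) auto
  also have "\<dots> = exp (- (real k / m))"
    by (simp flip: exp_of_nat_mult)
  also have "\<dots> \<le> exp (- (1 / c))"
    using ck by simp
  also have "\<dots> \<le> 1 - 1 / c * (1 - 1 / exp 1)"
    using linear_le_one_minus_exp_neg[of "1 / c"] c by simp
  finally show ?thesis by (simp add: c_def)
qed

lemma nondecreasing_onD:
  "nondecreasing_on V f \<Longrightarrow> X \<subseteq> Y \<Longrightarrow> Y \<subseteq> V \<Longrightarrow> f X \<le> f Y"
  unfolding nondecreasing_on_def by blast

lemma submodular_onD:
  "submodular_on V f \<Longrightarrow> X \<subseteq> Y \<Longrightarrow> Y \<subseteq> V \<Longrightarrow> e \<in> V \<Longrightarrow> e \<notin> Y \<Longrightarrow>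
    f (Y \<union> {e}) - f Y \<le> f (X \<union> {e}) - f X"
  unfolding submodular_on_def by blast

lemma submodular_on_gain_le_sum:
  assumes sub: "submodular_on V f" and X: "X \<subseteq> V"
    and "finite E" "E \<subseteq> V - X"
  shows "f (X \<union> E) - f X \<le> (\<Sum>e\<in>E. f (X \<union> {e}) - f X)"
  using assms(3,4)
proof (induction E rule: finite_induct)
  case empty
  then show ?case by simp
next
  case (insert e F)
  have "f ((X \<union> F) \<union> {e}) - f (X \<union> F) \<le> f (X \<union> {e}) - f X"
    using insert X by (intro submodular_onD[OF sub]) auto
  moreover have "X \<union> insert e F = (X \<union> F) \<union> {e}" by auto
  ultimately show ?case using insert by simp
qed

lemma greedy_runD:
  assumes "greedy_run f V S xs"
  shows "set xs \<subseteq> V - S"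
    and "j < length xs \<Longrightarrow> e \<in> V - (S \<union> set (take j xs)) \<Longrightarrow>
      f (S \<union> set (take j xs) \<union> {e}) - f (S \<union> set (take j xs))
        \<le> f (S \<union> set (take (Suc j) xs)) - f (S \<union> set (take j xs))"
  using assms unfolding greedy_run_def by blast+

lemma greedy_run_gap_le_card_mult_gain:
  assumes nd: "nondecreasing_on V f" and sub: "submodular_on V f" and "finite V"
    and S: "S \<subseteq> V" and T: "T \<subseteq> V"
    and g: "greedy_run f V S xs" and j: "j < length xs"
  shows "f T - f (S \<union> set (take j xs)) \<le>
    real (card (T - S)) * (f (S \<union> set (take (Suc j) xs)) - f (S \<union> set (take j xs)))"
proof -
  define Sj where "Sj = S \<union> set (take j xs)"
  define Sj' where "Sj' = S \<union> set (take (Suc j) xs)"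
  have xs: "set xs \<subseteq> V" using greedy_runD(1)[OF g] by blast
  have Sj: "Sj \<subseteq> V" and Sj': "Sj' \<subseteq> V"
    unfolding Sj_def Sj'_def using S xs set_take_subset by fastforce+
  have "Sj \<subseteq> Sj'"
    unfolding Sj_def Sj'_def using set_take_subset_set_take[of j "Suc j" xs] by auto
  then have gain: "0 \<le> f Sj' - f Sj" using nondecreasing_onD[OF nd _ Sj'] by simp
  have finT: "finite T" using T \<open>finite V\<close> by (rule finite_subset)
  have "f T \<le> f (Sj \<union> (T - Sj))"
    using Sj T by (intro nondecreasing_onD[OF nd]) auto
  also have "\<dots> \<le> f Sj + (\<Sum>e\<in>T - Sj. f (Sj \<union> {e}) - f Sj)"
    using submodular_on_gain_le_sum[OF sub Sj, of "T - Sj"] finT T by fastforce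
  also have "(\<Sum>e\<in>T - Sj. f (Sj \<union> {e}) - f Sj) \<le> real (card (T - Sj)) * (f Sj' - f Sj)"
    using greedy_runD(2)[OF g j] T unfolding Sj_def Sj'_def
    by (intro sum_bounded_above) auto
  also have "\<dots> \<le> real (card (T - S)) * (f Sj' - f Sj)"
    using gain finT by (intro mult_right_mono) (auto simp: Sj_def intro: card_mono)
  finally show ?thesis unfolding Sj_def Sj'_def by simp
qed

lemma greedy_run_gap_decay:
  assumes nd: "nondecreasing_on V f" and sub: "submodular_on V f" and finV: "finite V"
    and S: "S \<subseteq> V" and T: "T \<subseteq> V" and g: "greedy_run f V S xs"
    and ne: "T - S \<noteq> {}"
  shows "j \<le> length xs \<Longrightarrow>
    f T - f (S \<union> set (take j xs)) \<le> (1 - 1 / real (card (T - S))) ^ j * (f T - f S)"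
proof (induction j)
  case 0
  then show ?case by simp
next
  case (Suc j)
  define m where "m = real (card (T - S))"
  have m: "m \<ge> 1"
    using ne finite_subset[OF T finV] by (simp add: m_def Suc_le_eq card_gt_0_iff)
  define D where "D = f T - f (S \<union> set (take j xs))"
  define D' where "D' = f T - f (S \<union> set (take (Suc j) xs))"
  have "D \<le> m * (D - D')"
    using greedy_run_gap_le_card_mult_gain[OF nd sub finV S T g, of j] Suc.prems
    unfolding D_def D'_def m_def by simp
  then have "D' \<le> (1 - 1 / m) * D"
    using m by (simp add: field_simps)
  also have "\<dots> \<le> (1 - 1 / m) * ((1 - 1 / m) ^ j * (f T - f S))"
    using Suc m unfolding D_def m_def by (intro mult_left_mono) auto
  finally show ?case unfolding D'_def m_def by simp
qed

lemma greedy_run_guarantee: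
  assumes nd: "nondecreasing_on V f" and sub: "submodular_on V f" and finV: "finite V"
    and S: "S \<subseteq> V" and P: "P \<subseteq> V"
    and g: "greedy_run f V S xs" and "xs \<noteq> []"
  shows "f S + (1 - 1 / exp 1) / real_of_int \<lceil>real (card (P - S)) / real (length xs)\<rceil>
      * (f (P \<union> S) - f S) \<le> f (S \<union> set xs)"
proof (cases "P - S = {}")
  case True
  have "f S \<le> f (S \<union> set xs)"
    using greedy_runD(1)[OF g] S by (intro nondecreasing_onD[OF nd]) auto
  moreover have "P \<union> S = S" using True by blast
  ultimately show ?thesis by simp
next
  case False
  define T where "T = P \<union> S"
  define m where "m = real (card (P - S))"
  have TS: "T - S = P - S" unfolding T_def by auto
  have m: "m \<ge> 1"
    using False finite_subset[OF P finV] by (simp add: m_def Suc_le_eq card_gt_0_iff)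
  have gap: "0 \<le> f T - f S"
    using nondecreasing_onD[OF nd, of S T] P S unfolding T_def by auto
  have "f T - f (S \<union> set xs) \<le> (1 - 1 / m) ^ length xs * (f T - f S)"
    using greedy_run_gap_decay[OF nd sub finV S _ g, of T "length xs"] P S False
    unfolding TS by (simp add: T_def m_def)
  also have "\<dots> \<le> (1 - (1 - 1 / exp 1) / real_of_int \<lceil>m / real (length xs)\<rceil>) * (f T - f S)"
    using one_minus_inverse_power_le[OF m, of "length xs"] \<open>xs \<noteq> []\<close> gap
    by (intro mult_right_mono) (auto simp: Suc_le_eq)
  finally show ?thesis unfolding T_def m_def by (simp add: algebra_simps)
qed

theorem mainTheorem1:
  fixes V :: "'a set" and f :: "'a set \<Rightarrow> real" and b :: nat and A OPT :: "'a set"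
    and As :: "nat \<Rightarrow> 'a set" and Bs :: "nat \<Rightarrow> 'a list" and istar :: nat
  assumes "finite V"
    and "nondecreasing_on V f" and "submodular_on V f"
    and "b \<ge> 1" and "card V \<ge> b"
    and "A \<subseteq> V" and "card A = b"
    and "\<forall>i \<le> b. As i \<subseteq> A \<and> card (As i) = i"
    and "\<forall>i \<le> b. length (Bs i) = b - i \<and> greedy_run f V (As i) (Bs i)"
    and "istar \<le> b"
    and "\<forall>i \<le> b. f (As i \<union> set (Bs i)) \<le> f (As istar \<union> set (Bs istar))"
    and "OPT \<subseteq> V" and "card OPT = b"
    and "\<forall>S. S \<subseteq> V \<and> card S = b \<longrightarrow> f S \<le> f OPT"
  shows "f (As istar \<union> set (Bs istar)) \<ge> f A \<and>
         f (As istar \<union> set (Bs istar)) \<ge>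
           Max ((\<lambda>i. f (As i) + (1 - 1 / exp 1)
                   / real_of_int \<lceil>real (card (OPT - As i)) / real (b - i)\<rceil>
                   * (f (OPT \<union> As i) - f (As i))) ` {..<b})"
proof -
  have "As b = A"
    using card_subset_eq[of A "As b"] finite_subset[OF assms(6,1)] assms(7,8) by auto
  moreover have "Bs b = []" using assms(9) by auto
  ultimately have "f A \<le> f (As istar \<union> set (Bs istar))"
    using assms(11) by force
  moreover have "f (As i) + (1 - 1 / exp 1) / real_of_int \<lceil>real (card (OPT - As i)) / real (b - i)\<rceil>
      * (f (OPT \<union> As i) - f (As i)) \<le> f (As istar \<union> set (Bs istar))" if "i < b" for i
  proof -
    have Ai: "As i \<subseteq> V" and g: "greedy_run f V (As i) (Bs i)" and len: "length (Bs i) = b - i"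
      using assms(6,8,9) \<open>i < b\<close> by (auto dest!: spec[of _ i])
    then have "Bs i \<noteq> []" using \<open>i < b\<close> by auto
    from greedy_run_guarantee[OF assms(2,3,1) Ai assms(12) g this]
    have "f (As i) + (1 - 1 / exp 1) / real_of_int \<lceil>real (card (OPT - As i)) / real (b - i)\<rceil>
        * (f (OPT \<union> As i) - f (As i)) \<le> f (As i \<union> set (Bs i))"
      unfolding len .
    also have "\<dots> \<le> f (As istar \<union> set (Bs istar))"
      using assms(11) \<open>i < b\<close> by simp
    finally show ?thesis .
  qed
  ultimately show ?thesis
    using assms(4) by (auto intro!: Max.boundedI simp: lessThan_empty_iff)
qed

end
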